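(* Let $\gamma>0$, $p\geq1$, and $B\geq A$ be real numbers. Let $(a,b)\subseteq\mathbb{R}$ be an interval with length $b-a\geq1$, and let $u:(a,b)\to[A,B]$ be a measurable function. For every $x\in\mathbb{R}$ and every real $\delta>0$ set $a_{x,\delta}=(a-x)/\delta$, $b_{x,\delta}=(b-x)/\delta$, and define $v_{x,\delta}:\mathcal{D}\cap(a_{x,\delta},b_{x,\delta})\to\mathbb{R}$ by $v_{x,\delta}(q)=u(x+q\delta)$. Then for every real number $\lambda\geq B-A$, $$F_{\gamma,p,\lambda}(u,(a,b))=2\lambda^p\int_{1/2}^1 \delta^{\gamma-1}\left(\int_0^\delta DF_{\gamma,p,\lambda}\big(\delta,v_{x,\delta},(a_{x,\delta},b_{x,\delta})\big)\,dx\right)d\delta.$$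
   Context: For an interval $(a,b)\subseteq\mathbb{R}$ and measurable $u$ on it, $F_{\gamma,p,\lambda}(u,(a,b))=\lambda^p\iint_{E}|y-x|^{\gamma-1}\,dx\,dy$, where $E=\{(x,y)\in(a,b)^2:|u(y)-u(x)|>\lambda|y-x|^{1+\gamma/p}\}$. Let $\psi_{\gamma,p,\lambda}(\delta,\Delta)=1$ if $\Delta>\lambda\delta^{1+\gamma/p}$ and $0$ otherwise, for $(\delta,\Delta)\in[0,\infty)^2$. Let $\mathcal{D}=\{i/2^k:i\in\mathbb{Z},k\in\mathbb{N}\}$ be the dyadic numbers. For an interval $(a,b)$ and integer $k\geq0$, let $\mathcal{D}_k(a,b)=\{i\in\mathbb{Z}:[i/2^k,(i+1)/2^k]\subseteq(a,b)\}$. For $\delta>0$ and $v:\mathcal{D}\cap(a,b)\to\mathbb{R}$, the dyadic functional is $$DF_{\gamma,p,\lambda}(\delta,v,(a,b))=\sum_{k=0}^\infty\frac{1}{2^{k(\gamma+1)}}\sum_{i\in\mathcal{D}_k(a,b)}\psi_{\gamma,p,\lambda}\!\left(\frac{\delta}{2^k},\left|v\!\left(\tfrac{i+1}{2^k}\right)-v\!\left(\tfrac{i}{2^k}\right)\right|\right).$$ *)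

theory Defs
  imports "HOL-Analysis.Analysis"
begin

definition psi :: "real \<Rightarrow> real \<Rightarrow> real \<Rightarrow> real \<Rightarrow> real \<Rightarrow> real" where
  "psi g p lam \<delta> \<Delta> = (if \<Delta> > lam * \<delta> powr (1 + g / p) then 1 else 0)"

definition dyadic_idx :: "real \<Rightarrow> real \<Rightarrow> nat \<Rightarrow> int set" where
  "dyadic_idx a b k = {i. a < real_of_int i / 2 ^ k \<and> real_of_int (i + 1) / 2 ^ k < b}"

definition DF :: "real \<Rightarrow> real \<Rightarrow> real \<Rightarrow> real \<Rightarrow> (real \<Rightarrow> real) \<Rightarrow> real \<Rightarrow> real \<Rightarrow> ennreal" where
  "DF g p lam \<delta> v a b =
     (\<Sum>k. ennreal ((1 / 2 powr (real k * (g + 1))) *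
        (\<Sum>i\<in>dyadic_idx a b k.
           psi g p lam (\<delta> / 2 ^ k)
             \<bar>v (real_of_int (i + 1) / 2 ^ k) - v (real_of_int i / 2 ^ k)\<bar>)))"

definition Ffun :: "real \<Rightarrow> real \<Rightarrow> real \<Rightarrow> (real \<Rightarrow> real) \<Rightarrow> real \<Rightarrow> real \<Rightarrow> ennreal" where
  "Ffun g p lam u a b =
     ennreal (lam powr p) *
     (\<integral>\<^sup>+ z \<in> {(x, y). x \<in> {a<..<b} \<and> y \<in> {a<..<b} \<and>
                   \<bar>u y - u x\<bar> > lam * \<bar>y - x\<bar> powr (1 + g / p)}.
        ennreal (\<bar>snd z - fst z\<bar> powr (g - 1)) \<partial>(lebesgue :: (real \<times> real) measure))"

end

theory Submission
  imports Defs
begin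

text \<open>
  Let G(h) (big_jump_measure below) be the length of the set of t with [t, t + h] inside (a, b)
  and |u(t + h) - u(t)| > \<lambda> h^(1 + \<gamma>/p). Integrating along the direction y = x + h and
  using the symmetry in x and y, the left-hand side is 2 \<lambda>^p \<integral>_0^\<infinity> h^(\<gamma>-1) G(h) dh, and
  G vanishes for h \<ge> 1 because the oscillation of u is at most B - A \<le> \<lambda>. On the right,
  the level-k dyadic sum averaged over the offset x \<in> [0, \<delta>] sees every t exactly 2^k
  times, so the inner integral is \<Sum>_k 2^(-k\<gamma>) G(\<delta>/2^k); after substituting h = \<delta>/2^k
  the shells (2^(-k-1), 2^(-k)] tile (0, 1]. Replacing u by a bounded Borel function that
  agrees with it off a null set N changes neither side: for almost every x the dyadic
  points x + q\<delta> avoid N.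
\<close>

lemma borel_measurable_nn_integral_count_space [measurable]:
  fixes f :: "'i::countable \<Rightarrow> 'a \<Rightarrow> ennreal"
  assumes "\<And>i. f i \<in> borel_measurable M"
  shows "(\<lambda>x. \<integral>\<^sup>+i. f i x \<partial>count_space UNIV) \<in> borel_measurable M"
proof -
  interpret sigma_finite_measure "count_space (UNIV::'i set)"
    by (rule sigma_finite_measure_count_space)
  have "(\<lambda>(i, x). f i x) \<in> borel_measurable (count_space UNIV \<Otimes>\<^sub>M M)"
    by (rule measurable_pair_measure_countable1) (auto simp: assms)
  then have "(\<lambda>(x, i). f i x) \<in> borel_measurable (M \<Otimes>\<^sub>M count_space UNIV)"
    by (subst measurable_pair_swap_iff) simp
  then show ?thesis
    by (rule borel_measurable_nn_integral[of "\<lambda>x i. f i x", simplified])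
qed

lemma nn_integral_count_space_int_covering_shifts:
  fixes h t :: real and n :: nat
  assumes "h > 0"
  shows "(\<integral>\<^sup>+i. indicator {of_int i * h ..< of_int i * h + n * h} t \<partial>count_space (UNIV::int set))
       = of_nat n"
proof -
  define m where "m = \<lfloor>t / h\<rfloor>"
  have "t \<in> {of_int i * h ..< of_int i * h + n * h} \<longleftrightarrow> i \<in> {m - n + 1 .. m}" for i
  proof -
    have "t \<in> {of_int i * h ..< of_int i * h + n * h} \<longleftrightarrow>
        of_int i \<le> t / h \<and> t / h < of_int (i + int n)"
      using assms by (simp add: field_simps)
    also have "\<dots> \<longleftrightarrow> i \<le> m \<and> m < i + n"
      unfolding m_def by (simp add: le_floor_iff floor_less_iff)
    finally show ?thesis by auto
  qed
  then have "(\<integral>\<^sup>+i. indicator {of_int i * h ..< of_int i * h + n * h} t \<partial>count_space UNIV)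
      = (\<integral>\<^sup>+i. indicator {m - n + 1 .. m} i \<partial>count_space UNIV)"
    by (intro nn_integral_cong) (simp add: indicator_def)
  also have "\<dots> = of_nat n"
    by simp
  finally show ?thesis .
qed

lemma nn_integral_translate_window:
  fixes f :: "real \<Rightarrow> ennreal"
  assumes [measurable]: "f \<in> borel_measurable borel"
  shows "(\<integral>\<^sup>+x. f (x + s) * indicator {0..l} x \<partial>lborel)
       = (\<integral>\<^sup>+t. f t * indicator {s..<s + l} t \<partial>lborel)"
proof -
  have "(\<integral>\<^sup>+x. f (x + s) * indicator {0..l} x \<partial>lborel)
      = (\<integral>\<^sup>+x. f (s + 1 * x) * indicator {s..<s + l} (s + 1 * x) \<partial>lborel)"
    using AE_lborel_singleton[of l]
    by (intro nn_integral_cong_AE) (auto elim!: eventually_mono simp: indicator_def add.commute)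
  also have "\<dots> = (\<integral>\<^sup>+t. f t * indicator {s..<s + l} t \<partial>lborel)"
    using nn_integral_real_affine[of "\<lambda>t. f t * indicator {s..<s + l} t" 1 s] by simp
  finally show ?thesis .
qed

lemma nn_integral_periodization:
  fixes f :: "real \<Rightarrow> ennreal" and h :: real and n :: nat
  assumes [measurable]: "f \<in> borel_measurable borel" and "h > 0"
  shows "(\<integral>\<^sup>+x. (\<integral>\<^sup>+i. f (x + of_int i * h) \<partial>count_space UNIV) * indicator {0..n * h} x \<partial>lborel)
       = of_nat n * (\<integral>\<^sup>+t. f t \<partial>lborel)"
proof -
  let ?W = "\<lambda>i::int. {of_int i * h ..< of_int i * h + n * h}"
  have "(\<integral>\<^sup>+x. (\<integral>\<^sup>+i. f (x + of_int i * h) \<partial>count_space UNIV) * indicator {0..n * h} x \<partial>lborel)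
      = (\<integral>\<^sup>+x. (\<integral>\<^sup>+i. f (x + of_int i * h) * indicator {0..n * h} x \<partial>count_space UNIV) \<partial>lborel)"
    by (intro nn_integral_cong nn_integral_multc[symmetric]) simp
  also have "\<dots> = (\<integral>\<^sup>+i. (\<integral>\<^sup>+x. f (x + of_int i * h) * indicator {0..n * h} x \<partial>lborel)
                      \<partial>count_space UNIV)"
    by (rule nn_integral_count_space_nn_integral) auto
  also have "\<dots> = (\<integral>\<^sup>+i. (\<integral>\<^sup>+t. f t * indicator (?W i) t \<partial>lborel) \<partial>count_space UNIV)"
    by (simp add: nn_integral_translate_window)
  also have "\<dots> = (\<integral>\<^sup>+t. (\<integral>\<^sup>+i. f t * indicator (?W i) t \<partial>count_space UNIV) \<partial>lborel)"
    by (rule nn_integral_count_space_nn_integral[symmetric]) auto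
  also have "\<dots> = (\<integral>\<^sup>+t. f t * of_nat n \<partial>lborel)"
    using assms(2) by (simp add: nn_integral_cmult nn_integral_count_space_int_covering_shifts)
  also have "\<dots> = of_nat n * (\<integral>\<^sup>+t. f t \<partial>lborel)"
    using nn_integral_cmult[of f lborel "of_nat n"] by (simp add: mult.commute)
  finally show ?thesis .
qed

lemma nn_integral_lborel_symmetric:
  fixes F :: "real \<times> real \<Rightarrow> ennreal"
  assumes [measurable]: "F \<in> borel_measurable borel" and sym: "\<And>x y. F (x, y) = F (y, x)"
  shows "(\<integral>\<^sup>+z. F z \<partial>lborel)
       = 2 * (\<integral>\<^sup>+h. (\<integral>\<^sup>+x. F (x, x + h) \<partial>lborel) * indicator {0<..} h \<partial>lborel)"
proof -
  define K where "K h = (\<integral>\<^sup>+x. F (x, x + h) \<partial>lborel)" for h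
  have [measurable]: "K \<in> borel_measurable borel"
  proof -
    have "(\<lambda>h. \<integral>\<^sup>+x. F (x, x + h) \<partial>lborel) \<in> borel_measurable lborel"
      by measurable
    then show ?thesis
      unfolding K_def by simp
  qed
  have K_uminus: "K (- h) = K h" for h
    using nn_integral_real_affine[of "\<lambda>x. F (x, x + - h)" 1 h]
    by (simp add: K_def sym add.commute)
  have "(\<integral>\<^sup>+z. F z \<partial>lborel) = (\<integral>\<^sup>+x. \<integral>\<^sup>+y. F (x, y) \<partial>lborel \<partial>lborel)"
    using lborel.nn_integral_fst[of F] by (simp add: lborel_prod)
  also have "\<dots> = (\<integral>\<^sup>+x. \<integral>\<^sup>+h. F (x, x + h) \<partial>lborel \<partial>lborel)"
  proof (rule nn_integral_cong)
    show "(\<integral>\<^sup>+y. F (x, y) \<partial>lborel) = (\<integral>\<^sup>+h. F (x, x + h) \<partial>lborel)" for x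
      using nn_integral_real_affine[of "\<lambda>y. F (x, y)" 1 x] by simp
  qed
  also have "\<dots> = (\<integral>\<^sup>+h. K h \<partial>lborel)"
    using lborel_pair.Fubini[of "\<lambda>z. F (fst z, fst z + snd z)"] by (simp add: K_def)
  also have "\<dots> = (\<integral>\<^sup>+h. K h * indicator {0<..} h + K h * indicator {..<0} h \<partial>lborel)"
    using AE_lborel_singleton[of 0]
    by (intro nn_integral_cong_AE) (auto elim!: eventually_mono simp: indicator_def)
  also have "\<dots> = (\<integral>\<^sup>+h. K h * indicator {0<..} h \<partial>lborel)
                    + (\<integral>\<^sup>+h. K h * indicator {..<0} h \<partial>lborel)"
    by (rule nn_integral_add) measurable
  also have "(\<integral>\<^sup>+h. K h * indicator {..<0} h \<partial>lborel) = (\<integral>\<^sup>+h. K h * indicator {0<..} h \<partial>lborel)"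
    using nn_integral_real_affine[of "\<lambda>h. K h * indicator {..<0} h" "-1" 0]
    by (simp add: K_uminus indicator_def)
  finally show ?thesis
    by (simp add: K_def mult_2)
qed

lemma suminf_indicator_dyadic_shells:
  fixes h :: real
  shows "(\<Sum>k. indicator {1/2<..1} (2^k * h) :: ennreal) = indicator {0<..1} h"
proof (cases "0 < h \<and> h \<le> 1")
  case True
  define k0 where "k0 = nat \<lfloor>log 2 (1 / h)\<rfloor>"
  have "2^k * h \<in> {1/2<..1} \<longleftrightarrow> k = k0" for k :: nat
  proof -
    have "2^k * h \<in> {1/2<..1} \<longleftrightarrow> 2 powr real k \<le> 1 / h \<and> 1 / h < 2 powr (real k + 1)"
      using True by (auto simp: powr_realpow powr_add field_simps)
    also have "\<dots> \<longleftrightarrow> \<lfloor>log 2 (1 / h)\<rfloor> = int k"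
      using floor_log_eq_powr_iff[of "1 / h" 2 "int k"] True by simp
    also have "\<dots> \<longleftrightarrow> k = k0"
      using True by (auto simp: k0_def nat_eq_iff)
    finally show ?thesis .
  qed
  then have "(\<Sum>k. indicator {1/2<..1} (2^k * h) :: ennreal) = (\<Sum>k. if k = k0 then 1 else 0)"
    by (simp add: indicator_def of_bool_def)
  also have "\<dots> = 1"
    using sums_single[of k0 "\<lambda>_. 1::ennreal"] by (simp add: sums_iff)
  finally show ?thesis
    using True by simp
next
  case False
  have "2^k * h \<notin> {1/2<..1}" for k :: nat
  proof (cases "h \<le> 0")
    case True
    then have "2^k * h \<le> 0"
      by (simp add: mult_nonneg_nonpos)
    then show ?thesis by simp
  next
    case False
    with \<open>\<not> (0 < h \<and> h \<le> 1)\<close> have "h > 1"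
      by simp
    then have "1 * h \<le> 2^k * h"
      by (intro mult_right_mono) simp_all
    with \<open>h > 1\<close> have "2^k * h > 1"
      by linarith
    then show ?thesis
      by simp
  qed
  then have "(\<lambda>k. indicator {1/2<..1} (2^k * h) :: ennreal) = (\<lambda>_. 0)"
    by (intro ext indicator_simps(2))
  with False show ?thesis
    by simp
qed

lemma dyadic_rescaling_weight:
  fixes h g :: real and k :: nat
  assumes "h > 0"
  shows "2^k * ((2^k * h) powr (g - 1) * 2 powr (- (real k * g))) = h powr (g - 1)"
proof -
  have "(2^k * h) powr (g - 1) = 2 powr (real k * (g - 1)) * h powr (g - 1)"
    using assms by (simp add: powr_mult powr_realpow[symmetric] powr_powr)
  then show ?thesis
    by (simp add: powr_realpow[symmetric] powr_add[symmetric] algebra_simps)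
qed

lemma nn_integral_dyadic_shell:
  fixes G :: "real \<Rightarrow> ennreal" and g :: real and k :: nat
  assumes [measurable]: "G \<in> borel_measurable borel"
  shows "(\<integral>\<^sup>+\<delta>. ennreal (\<delta> powr (g - 1)) * (ennreal (2 powr (- (real k * g))) * G (\<delta> / 2^k))
            * indicator {1/2<..1} \<delta> \<partial>lborel)
       = (\<integral>\<^sup>+h. ennreal (h powr (g - 1)) * G h * indicator {1/2<..1} (2^k * h) \<partial>lborel)"
proof -
  define T where "T \<delta> =
      ennreal (\<delta> powr (g - 1)) * (ennreal (2 powr (- (real k * g))) * G (\<delta> / 2^k))
      * indicator {1/2<..1} \<delta>" for \<delta> :: real
  have [measurable]: "T \<in> borel_measurable borel"
    unfolding T_def by measurable
  have "(\<integral>\<^sup>+\<delta>. T \<delta> \<partial>lborel) = ennreal (2^k) * (\<integral>\<^sup>+h. T (2^k * h) \<partial>lborel)"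
    using nn_integral_real_affine[of T "2^k" 0] by simp
  also have "\<dots> = (\<integral>\<^sup>+h. ennreal (2^k) * T (2^k * h) \<partial>lborel)"
    by (rule nn_integral_cmult[symmetric]) simp
  also have "\<dots> = (\<integral>\<^sup>+h. ennreal (h powr (g - 1)) * G h * indicator {1/2<..1} (2^k * h) \<partial>lborel)"
  proof (intro nn_integral_cong)
    fix h :: real
    show "ennreal (2^k) * T (2^k * h)
        = ennreal (h powr (g - 1)) * G h * indicator {1/2<..1} (2^k * h)"
    proof (cases "2^k * h \<in> {1/2<..1}")
      case True
      then have "0 < 2^k * h"
        by simp
      then have "h > 0"
        by (simp add: zero_less_mult_iff)
      then have
        "ennreal (2^k) * (ennreal ((2^k * h) powr (g - 1)) * ennreal (2 powr (- (real k * g))))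
          = ennreal (h powr (g - 1))"
        using dyadic_rescaling_weight[of h k g]
        by (simp add: ennreal_mult[symmetric] del: ennreal_power)
      with True show ?thesis
        by (simp add: T_def mult.assoc[symmetric])
    qed (simp add: T_def)
  qed
  finally show ?thesis
    by (simp only: T_def)
qed

lemma nn_integral_dyadic_shells:
  fixes G :: "real \<Rightarrow> ennreal" and g :: real
  assumes [measurable]: "G \<in> borel_measurable borel"
  shows "(\<integral>\<^sup>+\<delta>. ennreal (\<delta> powr (g - 1)) * (\<Sum>k. ennreal (2 powr (- (real k * g))) * G (\<delta> / 2^k))
            * indicator {1/2..1} \<delta> \<partial>lborel)
       = (\<integral>\<^sup>+h. ennreal (h powr (g - 1)) * G h * indicator {0<..1} h \<partial>lborel)"
proof -
  have "(\<integral>\<^sup>+\<delta>. ennreal (\<delta> powr (g - 1)) * (\<Sum>k. ennreal (2 powr (- (real k * g))) * G (\<delta> / 2^k))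
            * indicator {1/2..1} \<delta> \<partial>lborel)
      = (\<integral>\<^sup>+\<delta>. (\<Sum>k. ennreal (\<delta> powr (g - 1)) * (ennreal (2 powr (- (real k * g))) * G (\<delta> / 2^k))
            * indicator {1/2<..1} \<delta>) \<partial>lborel)"
    using AE_lborel_singleton[of "1/2"]
    by (intro nn_integral_cong_AE)
      (auto elim!: eventually_mono simp: indicator_def ennreal_suminf_cmult)
  also have "\<dots> = (\<Sum>k. \<integral>\<^sup>+\<delta>. ennreal (\<delta> powr (g - 1))
            * (ennreal (2 powr (- (real k * g))) * G (\<delta> / 2^k)) * indicator {1/2<..1} \<delta> \<partial>lborel)"
    by (rule nn_integral_suminf) measurable
  also have "\<dots> = (\<Sum>k. \<integral>\<^sup>+h. ennreal (h powr (g - 1)) * G h * indicator {1/2<..1} (2^k * h) \<partial>lborel)"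
    by (simp only: nn_integral_dyadic_shell[OF assms])
  also have "\<dots> = (\<integral>\<^sup>+h. (\<Sum>k. ennreal (h powr (g - 1)) * G h * indicator {1/2<..1} (2^k * h))
                    \<partial>lborel)"
    by (rule nn_integral_suminf[symmetric]) measurable
  also have "\<dots> = (\<integral>\<^sup>+h. ennreal (h powr (g - 1)) * G h * indicator {0<..1} h \<partial>lborel)"
    by (simp only: ennreal_suminf_cmult suminf_indicator_dyadic_shells)
  finally show ?thesis .
qed

lemma bounded_borel_representative:
  fixes u :: "real \<Rightarrow> real"
  assumes "u \<in> borel_measurable (restrict_space lebesgue S)" and "S \<in> sets lebesgue"
    and "\<forall>x\<in>S. A \<le> u x \<and> u x \<le> B" and "A \<le> B"
  obtains w N where "w \<in> borel_measurable borel" "\<And>x. A \<le> w x \<and> w x \<le> B"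
    "N \<in> null_sets lborel" "\<And>x. x \<in> S \<Longrightarrow> x \<notin> N \<Longrightarrow> u x = w x"
proof -
  have "(\<lambda>x. indicator S x *\<^sub>R u x) \<in> borel_measurable lebesgue"
    using assms(1,2) by (subst (asm) borel_measurable_restrict_space_iff) auto
  then obtain w' where [measurable]: "w' \<in> borel_measurable lborel"
    and "AE x in lborel. indicator S x *\<^sub>R u x = w' x"
    using completion_ex_borel_measurable_real by blast
  then obtain N where "{x \<in> space lborel. indicator S x *\<^sub>R u x \<noteq> w' x} \<subseteq> N"
    "emeasure lborel N = 0" "N \<in> sets lborel"
    by (elim AE_E) auto
  then have N: "N \<in> null_sets lborel" "\<And>x. x \<notin> N \<Longrightarrow> indicator S x *\<^sub>R u x = w' x"
    by auto
  define w where "w x = max A (min B (w' x))" for x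
  show ?thesis
  proof (rule that[of w N])
    show "w \<in> borel_measurable borel"
      unfolding w_def by measurable
    show "A \<le> w x \<and> w x \<le> B" for x
      using \<open>A \<le> B\<close> by (auto simp: w_def)
    show "u x = w x" if "x \<in> S" "x \<notin> N" for x
      using that assms(3) N(2)[of x] by (auto simp: w_def)
  qed (fact N(1))
qed

lemma finite_dyadic_idx: "finite (dyadic_idx a b k)"
proof (rule finite_subset)
  show "dyadic_idx a b k \<subseteq> {\<lfloor>a * 2^k\<rfloor> .. \<lceil>b * 2^k\<rceil>}"
  proof
    fix i assume "i \<in> dyadic_idx a b k"
    then have "a * 2^k < of_int i" "of_int i + 1 < b * 2^k"
      by (auto simp: dyadic_idx_def field_simps)
    then show "i \<in> {\<lfloor>a * 2^k\<rfloor> .. \<lceil>b * 2^k\<rceil>}"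
      by (auto simp: floor_le_iff le_ceiling_iff)
  qed
qed simp

lemma DF_cong:
  assumes "\<And>k i. a < of_int i / 2^k \<Longrightarrow> of_int i / 2^k < b \<Longrightarrow>
      v (of_int i / 2^k) = v' (of_int i / 2^k)"
  shows "DF g p lam \<delta> v a b = DF g p lam \<delta> v' a b"
  unfolding DF_def
proof (intro suminf_cong arg_cong[where f=ennreal] arg_cong2[where f="(*)"] refl sum.cong)
  fix k :: nat and i assume "i \<in> dyadic_idx a b k"
  then have "a < of_int i / 2^k" "of_int (i + 1) / 2^k < b"
    by (auto simp: dyadic_idx_def)
  moreover have "of_int i / 2^k < (of_int (i + 1) / 2^k :: real)"
    by (simp add: divide_strict_right_mono)
  ultimately show "psi g p lam (\<delta> / 2 ^ k) \<bar>v (of_int (i + 1) / 2 ^ k) - v (of_int i / 2 ^ k)\<bar> =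
      psi g p lam (\<delta> / 2 ^ k) \<bar>v' (of_int (i + 1) / 2 ^ k) - v' (of_int i / 2 ^ k)\<bar>"
    using assms[of i k] assms[of "i + 1" k] by simp
qed

lemma nn_integral_DF_cong_AE:
  assumes "N \<in> null_sets lborel" and "\<And>x. x \<in> {a<..<b} \<Longrightarrow> x \<notin> N \<Longrightarrow> u x = w x"
    and "\<delta> > 0"
  shows "(\<integral>\<^sup>+x\<in>S. DF g p lam \<delta> (\<lambda>q. u (x + q * \<delta>)) ((a - x) / \<delta>) ((b - x) / \<delta>) \<partial>lborel)
       = (\<integral>\<^sup>+x\<in>S. DF g p lam \<delta> (\<lambda>q. w (x + q * \<delta>)) ((a - x) / \<delta>) ((b - x) / \<delta>) \<partial>lborel)"
proof -
  have off_N: "AE x in lborel. \<forall>(k::nat) (i::int). x + of_int i / 2^k * \<delta> \<notin> N"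
  proof (simp only: AE_all_countable, intro allI)
    fix k :: nat and i :: int
    show "AE x in lborel. x + of_int i / 2^k * \<delta> \<notin> N"
      using AE_not_in[OF null_sets_translation[OF assms(1), of "- (of_int i / 2^k * \<delta>)"]] by simp
  qed
  have DF_eq: "DF g p lam \<delta> (\<lambda>q. u (x + q * \<delta>)) ((a - x) / \<delta>) ((b - x) / \<delta>)
      = DF g p lam \<delta> (\<lambda>q. w (x + q * \<delta>)) ((a - x) / \<delta>) ((b - x) / \<delta>)"
    if "\<forall>(k::nat) (i::int). x + of_int i / 2^k * \<delta> \<notin> N" for x
  proof (rule DF_cong)
    fix k :: nat and i :: int
    assume "(a - x) / \<delta> < of_int i / 2^k" and "of_int i / 2^k < (b - x) / \<delta>"
    then have "x + of_int i / 2^k * \<delta> \<in> {a<..<b}"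
      using \<open>\<delta> > 0\<close> by (auto simp: field_simps)
    then show "u (x + of_int i / 2^k * \<delta>) = w (x + of_int i / 2^k * \<delta>)"
      using assms(2) that by blast
  qed
  show ?thesis
    using off_N by (intro nn_integral_cong_AE) (auto elim!: eventually_mono simp: DF_eq)
qed

definition big_jump ::
    "real \<Rightarrow> real \<Rightarrow> real \<Rightarrow> real \<Rightarrow> (real \<Rightarrow> real) \<Rightarrow> real \<Rightarrow> real \<Rightarrow> ennreal" where
  "big_jump lam c a b w h t =
     (if a < t \<and> t + h < b \<and> lam * h powr c < \<bar>w (t + h) - w t\<bar> then 1 else 0)"

definition big_jump_measure ::
    "real \<Rightarrow> real \<Rightarrow> real \<Rightarrow> real \<Rightarrow> (real \<Rightarrow> real) \<Rightarrow> real \<Rightarrow> ennreal" where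
  "big_jump_measure lam c a b w h = (\<integral>\<^sup>+t. big_jump lam c a b w h t \<partial>lborel)"

lemma measurable_big_jump [measurable]:
  assumes [measurable]: "w \<in> borel_measurable borel"
    and [measurable]: "f \<in> borel_measurable M" "g \<in> borel_measurable M"
  shows "(\<lambda>z. big_jump lam c a b w (f z) (g z)) \<in> borel_measurable M"
  unfolding big_jump_def by measurable

lemma measurable_big_jump_measure [measurable]:
  assumes [measurable]: "w \<in> borel_measurable borel"
  shows "big_jump_measure lam c a b w \<in> borel_measurable borel"
proof -
  have "(\<lambda>h. big_jump_measure lam c a b w h) \<in> borel_measurable lborel"
    unfolding big_jump_measure_def by measurable
  then show ?thesis by simp
qed

lemma big_jump_measure_eq_0:
  assumes "\<And>s t. \<bar>w s - w t\<bar> \<le> lam" and "c \<ge> 0" and "h \<ge> 1"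
  shows "big_jump_measure lam c a b w h = 0"
proof -
  have "lam \<ge> 0"
    using assms(1)[of 0 0] by simp
  moreover have "1 \<le> h powr c"
    using assms(2,3) by (simp add: ge_one_powr_ge_zero)
  ultimately have "lam \<le> lam * h powr c"
    using mult_left_mono[of 1 "h powr c" lam] by simp
  then have "big_jump lam c a b w h t = 0" for t
    using assms(1)[of "t + h" t] by (simp add: big_jump_def)
  then show ?thesis
    by (simp add: big_jump_measure_def)
qed

lemma DF_rescaled_eq_suminf_big_jump:
  assumes "\<delta> > 0"
  shows "DF g p lam \<delta> (\<lambda>q. w (x + q * \<delta>)) ((a - x) / \<delta>) ((b - x) / \<delta>)
    = (\<Sum>k. ennreal (1 / 2 powr (real k * (g + 1))) *
        (\<integral>\<^sup>+i. big_jump lam (1 + g / p) a b w (\<delta> / 2^k) (x + of_int i * (\<delta> / 2^k))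
          \<partial>count_space UNIV))"
  unfolding DF_def
proof (rule suminf_cong)
  fix k :: nat
  define h where "h = \<delta> / 2^k"
  let ?D = "dyadic_idx ((a - x) / \<delta>) ((b - x) / \<delta>) k"
  let ?P = "\<lambda>i. psi g p lam h \<bar>w (x + of_int (i + 1) / 2 ^ k * \<delta>) - w (x + of_int i / 2 ^ k * \<delta>)\<bar>"
  have grid: "x + of_int j / 2 ^ k * \<delta> = x + of_int j * h" for j :: int
    by (simp add: h_def)
  have mem_D: "i \<in> ?D \<longleftrightarrow> a < x + of_int i * h \<and> x + of_int i * h + h < b" for i
    using assms by (simp add: dyadic_idx_def h_def field_simps)
  have "ennreal (1 / 2 powr (real k * (g + 1)) * sum ?P ?D)
      = ennreal (1 / 2 powr (real k * (g + 1))) * (\<Sum>i\<in>?D. ennreal (?P i))"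
    by (subst ennreal_mult') (simp_all add: sum_ennreal psi_def)
  also have "(\<Sum>i\<in>?D. ennreal (?P i)) = (\<Sum>i\<in>?D. big_jump lam (1 + g / p) a b w h (x + of_int i * h))"
    by (intro sum.cong refl)
      (simp only: grid, simp add: mem_D big_jump_def psi_def distrib_right add.assoc)
  also have "\<dots> = (\<integral>\<^sup>+i. big_jump lam (1 + g / p) a b w h (x + of_int i * h) \<partial>count_space UNIV)"
    by (rule nn_integral_count_space'[symmetric])
      (auto simp: finite_dyadic_idx mem_D big_jump_def)
  finally show "ennreal (1 / 2 powr (real k * (g + 1)) * sum ?P ?D) =
      ennreal (1 / 2 powr (real k * (g + 1))) *
      (\<integral>\<^sup>+i. big_jump lam (1 + g / p) a b w (\<delta> / 2^k) (x + of_int i * (\<delta> / 2^k)) \<partial>count_space UNIV)"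
    by (simp add: h_def)
qed

lemma nn_integral_DF_window:
  assumes [measurable]: "w \<in> borel_measurable borel" and "\<delta> > 0"
  shows "(\<integral>\<^sup>+x. DF g p lam \<delta> (\<lambda>q. w (x + q * \<delta>)) ((a - x) / \<delta>) ((b - x) / \<delta>)
            * indicator {0..\<delta>} x \<partial>lborel)
       = (\<Sum>k. ennreal (2 powr (- (real k * g))) * big_jump_measure lam (1 + g / p) a b w (\<delta> / 2^k))"
proof -
  let ?G = "big_jump_measure lam (1 + g / p) a b w"
  let ?I = "\<lambda>k x. \<integral>\<^sup>+i. big_jump lam (1 + g / p) a b w (\<delta> / 2^k) (x + of_int i * (\<delta> / 2^k))
                   \<partial>count_space UNIV"
  let ?c = "\<lambda>k::nat. ennreal (1 / 2 powr (real k * (g + 1)))"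
  have weight: "?c k * 2^k = ennreal (2 powr (- (real k * g)))" for k
  proof -
    have "1 / 2 powr (real k * (g + 1)) * 2^k = (2 powr (- (real k * g)) :: real)"
      by (simp add: powr_realpow[symmetric] powr_add[symmetric] powr_diff[symmetric]
          divide_powr_uminus algebra_simps)
    then show ?thesis
      by (metis ennreal_mult'' ennreal_numeral ennreal_power zero_le_numeral zero_le_power)
  qed
  have level: "(\<integral>\<^sup>+x. ?c k * (?I k x * indicator {0..\<delta>} x) \<partial>lborel)
      = ennreal (2 powr (- (real k * g))) * ?G (\<delta> / 2^k)" for k
  proof -
    have "(\<integral>\<^sup>+x. ?c k * (?I k x * indicator {0..\<delta>} x) \<partial>lborel)
        = ?c k * (\<integral>\<^sup>+x. ?I k x * indicator {0..\<delta>} x \<partial>lborel)"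
      by (rule nn_integral_cmult) measurable
    also have "\<dots> = ?c k * (2^k * ?G (\<delta> / 2^k))"
      using nn_integral_periodization[of "big_jump lam (1 + g / p) a b w (\<delta> / 2^k)" "\<delta> / 2^k" "2^k"]
        assms(2)
      by (simp add: big_jump_measure_def)
    finally show ?thesis
      by (simp only: weight mult.assoc[symmetric])
  qed
  have "(\<integral>\<^sup>+x. DF g p lam \<delta> (\<lambda>q. w (x + q * \<delta>)) ((a - x) / \<delta>) ((b - x) / \<delta>)
          * indicator {0..\<delta>} x \<partial>lborel)
      = (\<integral>\<^sup>+x. (\<Sum>k. ?c k * (?I k x * indicator {0..\<delta>} x)) \<partial>lborel)"
    using assms(2)
    by (simp only: DF_rescaled_eq_suminf_big_jump ennreal_suminf_multc[symmetric] mult.assoc)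
  also have "\<dots> = (\<Sum>k. \<integral>\<^sup>+x. ?c k * (?I k x * indicator {0..\<delta>} x) \<partial>lborel)"
    by (rule nn_integral_suminf) measurable
  finally show ?thesis
    by (simp only: level)
qed

lemma Ffun_cong_AE:
  assumes "N \<in> null_sets lborel" and "\<And>x. x \<in> {a<..<b} \<Longrightarrow> x \<notin> N \<Longrightarrow> u x = w x"
  shows "Ffun g p lam u a b = Ffun g p lam w a b"
proof -
  have "N \<times> UNIV \<in> null_sets (lborel \<Otimes>\<^sub>M lborel)" "UNIV \<times> N \<in> null_sets (lborel \<Otimes>\<^sub>M lborel)"
    using assms(1) by auto
  from this[THEN AE_not_in] have off_N: "AE z in lborel \<Otimes>\<^sub>M lborel. fst z \<notin> N \<and> snd z \<notin> N"
    by eventually_elim auto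
  show ?thesis
    unfolding Ffun_def nn_integral_completion lborel_prod[symmetric]
    by (intro arg_cong2[where f="(*)"] refl nn_integral_cong_AE eventually_mono[OF off_N])
      (auto simp: indicator_def assms(2))
qed

lemma Ffun_eq_nn_integral_big_jump_measure:
  assumes [measurable]: "w \<in> borel_measurable borel"
  shows "Ffun g p lam w a b = ennreal (lam powr p) *
     (2 * (\<integral>\<^sup>+h. ennreal (h powr (g - 1)) * big_jump_measure lam (1 + g / p) a b w h
                    * indicator {0<..} h \<partial>lborel))"
proof -
  define E where "E = {(x, y). x \<in> {a<..<b} \<and> y \<in> {a<..<b} \<and>
                             \<bar>w y - w x\<bar> > lam * \<bar>y - x\<bar> powr (1 + g / p)}"
  define F where "F z = ennreal (\<bar>snd z - fst z\<bar> powr (g - 1)) * indicator E z" for z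
  have "E = {z \<in> space (borel \<Otimes>\<^sub>M borel). fst z \<in> {a<..<b} \<and> snd z \<in> {a<..<b} \<and>
      \<bar>w (snd z) - w (fst z)\<bar> > lam * \<bar>snd z - fst z\<bar> powr (1 + g / p)}"
    by (auto simp: E_def space_pair_measure)
  also have "\<dots> \<in> sets (borel \<Otimes>\<^sub>M borel)"
    by measurable
  finally have [measurable]: "E \<in> sets (borel \<Otimes>\<^sub>M borel)" .
  have "F \<in> borel_measurable (borel \<Otimes>\<^sub>M borel)"
    unfolding F_def by measurable
  then have F_measurable: "F \<in> borel_measurable borel"
    by (simp only: borel_prod)
  have F_sym: "F (x, y) = F (y, x)" for x y
    by (auto simp: F_def E_def indicator_def abs_minus_commute)
  have F_shift: "F (x, x + h) = ennreal (h powr (g - 1)) * big_jump lam (1 + g / p) a b w h x"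
    if "h > 0" for x h
    using that by (auto simp: F_def E_def big_jump_def indicator_def)
  have "Ffun g p lam w a b = ennreal (lam powr p) * (\<integral>\<^sup>+z. F z \<partial>lborel)"
    unfolding Ffun_def F_def E_def nn_integral_completion ..
  also have "(\<integral>\<^sup>+z. F z \<partial>lborel)
      = 2 * (\<integral>\<^sup>+h. (\<integral>\<^sup>+x. F (x, x + h) \<partial>lborel) * indicator {0<..} h \<partial>lborel)"
    by (rule nn_integral_lborel_symmetric[OF F_measurable F_sym])
  also have "(\<integral>\<^sup>+h. (\<integral>\<^sup>+x. F (x, x + h) \<partial>lborel) * indicator {0<..} h \<partial>lborel)
      = (\<integral>\<^sup>+h. ennreal (h powr (g - 1)) * big_jump_measure lam (1 + g / p) a b w h
                  * indicator {0<..} h \<partial>lborel)"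
    by (intro nn_integral_cong)
      (auto simp: F_shift big_jump_measure_def nn_integral_cmult indicator_def)
  finally show ?thesis .
qed

lemma Ffun_dyadic_representation_borel:
  assumes [measurable]: "w \<in> borel_measurable borel"
    and oscillation: "\<And>s t. \<bar>w s - w t\<bar> \<le> lam" and "1 + g / p \<ge> 0"
  shows "Ffun g p lam w a b =
    ennreal (2 * lam powr p) *
    (\<integral>\<^sup>+ \<delta> \<in> {1/2..1}. ennreal (\<delta> powr (g - 1)) *
       (\<integral>\<^sup>+ x \<in> {0..\<delta>}. DF g p lam \<delta> (\<lambda>q. w (x + q * \<delta>)) ((a - x) / \<delta>) ((b - x) / \<delta>) \<partial>lebesgue)
     \<partial>lebesgue)"
proof -
  let ?G = "big_jump_measure lam (1 + g / p) a b w"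
  define I where "I = (\<integral>\<^sup>+h. ennreal (h powr (g - 1)) * ?G h * indicator {0<..1} h \<partial>lborel)"
  have "(\<integral>\<^sup>+h. ennreal (h powr (g - 1)) * ?G h * indicator {0<..} h \<partial>lborel) = I"
    unfolding I_def
    using big_jump_measure_eq_0[OF oscillation \<open>1 + g / p \<ge> 0\<close>]
    by (intro nn_integral_cong) (auto simp: indicator_def)
  then have lhs: "Ffun g p lam w a b = ennreal (lam powr p) * (2 * I)"
    by (simp add: Ffun_eq_nn_integral_big_jump_measure)
  have "(\<integral>\<^sup>+ \<delta> \<in> {1/2..1}. ennreal (\<delta> powr (g - 1)) *
       (\<integral>\<^sup>+ x \<in> {0..\<delta>}. DF g p lam \<delta> (\<lambda>q. w (x + q * \<delta>)) ((a - x) / \<delta>) ((b - x) / \<delta>) \<partial>lebesgue)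
     \<partial>lebesgue)
    = (\<integral>\<^sup>+\<delta>. ennreal (\<delta> powr (g - 1)) * (\<Sum>k. ennreal (2 powr (- (real k * g))) * ?G (\<delta> / 2^k))
         * indicator {1/2..1} \<delta> \<partial>lborel)"
    unfolding nn_integral_completion
    by (intro nn_integral_cong)
      (auto split: split_indicator intro!: arg_cong[where f="(*) _"] nn_integral_DF_window)
  also have "\<dots> = I"
    unfolding I_def by (rule nn_integral_dyadic_shells) simp
  finally show ?thesis
    using lhs by (simp add: ennreal_mult ac_simps)
qed

theorem proposition2p1:
  fixes g p A B a b lam :: real and u :: "real \<Rightarrow> real"
  assumes "g > 0" and "p \<ge> 1" and "B \<ge> A" and "b - a \<ge> 1"
    and "u \<in> borel_measurable (restrict_space lebesgue {a<..<b})"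
    and "\<forall>x\<in>{a<..<b}. A \<le> u x \<and> u x \<le> B"
    and "lam \<ge> B - A"
  shows "Ffun g p lam u a b =
    ennreal (2 * lam powr p) *
    (\<integral>\<^sup>+ \<delta> \<in> {1/2..1}. ennreal (\<delta> powr (g - 1)) *
       (\<integral>\<^sup>+ x \<in> {0..\<delta>}. DF g p lam \<delta> (\<lambda>q. u (x + q * \<delta>)) ((a - x) / \<delta>) ((b - x) / \<delta>) \<partial>lebesgue)
     \<partial>lebesgue)"
proof -
  let ?R = "\<lambda>v. ennreal (2 * lam powr p) *
    (\<integral>\<^sup>+ \<delta> \<in> {1/2..1}. ennreal (\<delta> powr (g - 1)) *
       (\<integral>\<^sup>+ x \<in> {0..\<delta>}. DF g p lam \<delta> (\<lambda>q. v (x + q * \<delta>)) ((a - x) / \<delta>) ((b - x) / \<delta>) \<partial>lebesgue)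
     \<partial>lebesgue)"
  obtain w N where [measurable]: "w \<in> borel_measurable borel"
    and w_bounds: "\<And>x. A \<le> w x \<and> w x \<le> B"
    and N: "N \<in> null_sets lborel" and u_eq_w: "\<And>x. x \<in> {a<..<b} \<Longrightarrow> x \<notin> N \<Longrightarrow> u x = w x"
    using bounded_borel_representative[OF assms(5) _ assms(6,3)] by auto
  have oscillation: "\<bar>w s - w t\<bar> \<le> lam" for s t
    using w_bounds[of s] w_bounds[of t] assms(7) by linarith
  have "1 + g / p \<ge> 0"
    using assms(1,2) by simp
  have "Ffun g p lam u a b = Ffun g p lam w a b"
    by (rule Ffun_cong_AE[OF N u_eq_w])
  also have "\<dots> = ?R w"
    by (rule Ffun_dyadic_representation_borel) fact+
  also have "\<dots> = ?R u"
    unfolding nn_integral_completion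
    by (intro arg_cong[where f="(*) _"] nn_integral_cong)
      (auto split: split_indicator intro!: arg_cong[where f="(*) _"]
        nn_integral_DF_cong_AE[OF N u_eq_w, symmetric])
  finally show ?thesis .
qed

end
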